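(* Let $g\ge1$ and $n\ge1$. For any $T_n\in\mathcal T_n$ there exists $\widehat T_n\in\mathcal T_n$ with $\hat w_n(\widehat T_n)>0$ such that $\widehat T_n$ covers $T_n$ and \[ C(T_n)\le C(\widehat T_n)\le (C(T_n)+1)L_{C(T_n),n}-1, \] where $L_{C,n}=\left\lceil\frac{\log n}{\lfloor\log(g+1)\rfloor}\right\rceil+1$ if $C=0$ and $L_{C,n}=\frac{\log\frac{n}{C+1}}{\lfloor\log(g+1)\rfloor}+2$ if $C\ge1$.
   Context: $\log$ is base 2. $\mathcal T_n$ is the set of transition paths $T=(t_1,\ldots,t_C;n)$ with $C\ge0$ and $1<t_1<\cdots<t_C\le n$; $C(T)=C$ is its number of switches. $\widehat T$ covers $T$ if every switch point of $T$ is a switch point of $\widehat T$. Weights: given switch probabilities $p(t|t')\in(0,1)$ for all $1\le t'<t$, let $U_1=1$ and $\Pr(U_t=t\mid U_{t-1}=t')=p(t|t')=1-\Pr(U_t=t'\mid U_{t-1}=t')$; a path $T\in\mathcal T_t$ corresponds to the realization jumping exactly at its switch points and $w_t(T)$ is its probability. Pruning with parameter $g$: write $s=o2^u$ with $o$ odd, $u\ge0$; $h_t(s)=1$ if $s\le t<s+g2^u$ and $0$ otherwise; $\hat p(t|t')=1-h_t(t')(1-p(t|t'))$; $\hat w_t$ is the Markov weight function defined from $\hat p$. *)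

theory Defs
  imports Complex_Main "HOL-Computational_Algebra.Primes"
begin

text \<open>A transition path T = (t_1,...,t_C; n) is represented by its set of switch points
  {t_1,...,t_C}, a subset of {2..n} (i.e. 1 < t_i \<le> n).\<close>
definition paths :: "nat \<Rightarrow> nat set set" where
  "paths n = {S. S \<subseteq> {2..n}}"

definition nsw :: "nat set \<Rightarrow> nat" where
  "nsw S = card S"

definition covers :: "nat set \<Rightarrow> nat set \<Rightarrow> bool" where
  "covers That T \<longleftrightarrow> T \<subseteq> That"

text \<open>Value of the chain U_t along the path S: the last switch point \<le> t (or 1).\<close>
definition last_sw :: "nat set \<Rightarrow> nat \<Rightarrow> nat" where
  "last_sw S t = Max (insert 1 {x \<in> S. x \<le> t})"

text \<open>Markov weight: q t t' = Pr(U_t = t | U_{t-1} = t'); w_t(S) is the probability that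
  the chain jumps exactly at the points of S up to time t.\<close>
definition mweight :: "(nat \<Rightarrow> nat \<Rightarrow> real) \<Rightarrow> nat \<Rightarrow> nat set \<Rightarrow> real" where
  "mweight q t S = (\<Prod>s\<in>{2..t}. if s \<in> S then q s (last_sw S (s - 1))
                                  else 1 - q s (last_sw S (s - 1)))"

definition hprune :: "nat \<Rightarrow> nat \<Rightarrow> nat \<Rightarrow> real" where
  "hprune g t s = (if (s::nat) \<le> t \<and> t < s + g * 2 ^ multiplicity (2::nat) (s::nat) then 1 else 0)"

definition phat :: "nat \<Rightarrow> (nat \<Rightarrow> nat \<Rightarrow> real) \<Rightarrow> nat \<Rightarrow> nat \<Rightarrow> real" where
  "phat g p t t' = 1 - hprune g t t' * (1 - p t t')"

definition Lbound :: "nat \<Rightarrow> nat \<Rightarrow> nat \<Rightarrow> real" where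
  "Lbound g C n = (if C = 0
     then real_of_int \<lceil>log 2 (real n) / real_of_int \<lfloor>log 2 (real g + 1)\<rfloor>\<rceil> + 1
     else log 2 (real n / (real C + 1)) / real_of_int \<lfloor>log 2 (real g + 1)\<rfloor> + 2)"

end

theory Submission
  imports Defs
begin

text \<open>
  The pruned chain, sitting in state \<open>t'\<close> with \<open>t' = o 2^u\<close>, survives up to time
  \<open>t' + g 2^u\<close>. So a path has positive pruned weight as soon as every gap between consecutive
  switch points is shorter than that reach. We cover \<open>T\<close> by inserting extra switch points
  into each gap: from a state of 2-adic valuation \<open>u\<close> we jump to the next multiple of
  \<open>2^(u+k)\<close>, where \<open>2^k \<le> g + 1\<close>; this stays within reach and raises the valuation by
  \<open>k\<close>. Hence a gap of length \<open>d\<close> needs at most \<open>log d / k + 1\<close> new points, and concavity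
  of the logarithm bounds the total over the \<open>C + 1\<close> gaps.
\<close>

definition reach :: "nat \<Rightarrow> nat \<Rightarrow> nat" where
  "reach g x = x + g * 2 ^ multiplicity (2::nat) x"

text \<open>\<open>survives g a S b\<close>: started in state \<open>a\<close> and switching exactly at \<open>S\<close>, the pruned chain
  is never in a pruned state at a non-switch time of \<open>(a, b)\<close>.\<close>
definition survives :: "nat \<Rightarrow> nat \<Rightarrow> nat set \<Rightarrow> nat \<Rightarrow> bool" where
  "survives g a S b \<longleftrightarrow>
     (\<forall>s. a < s \<longrightarrow> s < b \<longrightarrow> s \<notin> S \<longrightarrow> s < reach g (Max (insert a {x \<in> S. x \<le> s - 1})))"

definition fits :: "nat \<Rightarrow> nat \<Rightarrow> nat \<Rightarrow> bool" where
  "fits k j d \<longleftrightarrow> j = 0 \<or> 2 ^ ((j - 1) * k) < d"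

lemma next_multiple_raises_multiplicity:
  fixes a k u :: nat
  assumes "0 < a" "1 \<le> k" "u = multiplicity (2::nat) a"
  defines "y \<equiv> (a div 2 ^ (u + k) + 1) * 2 ^ (u + k)"
  shows "a < y" "y - a \<le> (2 ^ k - 1) * 2 ^ u" "u + k \<le> multiplicity (2::nat) y"
proof -
  have "2 ^ u dvd a" using assms multiplicity_dvd by blast
  then have "2 ^ u dvd a mod 2 ^ (u + k)" by (simp add: dvd_mod le_imp_power_dvd)
  moreover have "\<not> 2 ^ (u + k) dvd a"
    using assms multiplicity_geI[of a 2 "u + k"] by auto
  then have "a mod 2 ^ (u + k) \<noteq> 0" by (simp add: mod_eq_0_iff_dvd)
  ultimately have low: "2 ^ u \<le> a mod 2 ^ (u + k)" by (simp add: dvd_imp_le)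
  have high: "a mod 2 ^ (u + k) < 2 ^ (u + k)" by simp
  have "y = a div 2 ^ (u + k) * 2 ^ (u + k) + 2 ^ (u + k)" by (simp add: y_def)
  then have y: "y = a + (2 ^ (u + k) - a mod 2 ^ (u + k))"
    using div_mult_mod_eq[of a "2 ^ (u + k)"] high by linarith
  show "a < y" using y high by linarith
  have "y - a \<le> 2 ^ (u + k) - 2 ^ u" using y low by linarith
  also have "\<dots> = (2 ^ k - 1) * 2 ^ u" by (simp add: power_add diff_mult_distrib2 mult.commute)
  finally show "y - a \<le> (2 ^ k - 1) * 2 ^ u" .
  show "u + k \<le> multiplicity (2::nat) y"
    using \<open>a < y\<close> by (intro multiplicity_geI) (auto simp: y_def)
qed

lemma Max_eq_Max_cofinal_subset:
  fixes A B :: "'a::linorder set"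
  assumes "finite A" "B \<subseteq> A" "B \<noteq> {}" "\<forall>x\<in>A. \<exists>y\<in>B. x \<le> y"
  shows "Max A = Max B"
proof (rule antisym)
  have "finite B" using assms finite_subset by blast
  obtain y where "y \<in> B" "Max A \<le> y" using assms Max_in[of A] by blast
  then show "Max A \<le> Max B" using \<open>finite B\<close> order_trans by fastforce
  show "Max B \<le> Max A" using assms by (intro Max_mono) auto
qed

lemma survives_concat:
  assumes "a < m" "S \<subseteq> {a<..<m}" "survives g a S m" "P \<subseteq> {m<..<b}" "survives g m P b"
  shows "survives g a (S \<union> {m} \<union> P) b"
  unfolding survives_def
proof (intro allI impI)
  fix s assume s: "a < s" "s < b" "s \<notin> S \<union> {m} \<union> P"
  let ?U = "S \<union> {m} \<union> P"
  have fin: "finite S" "finite P" using assms(2,4) finite_subset by auto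
  consider "s < m" | "m < s" using s by fastforce
  then show "s < reach g (Max (insert a {x \<in> ?U. x \<le> s - 1}))"
  proof cases
    case 1
    then have "{x \<in> ?U. x \<le> s - 1} = {x \<in> S. x \<le> s - 1}" using assms(4) by fastforce
    then show ?thesis using assms(3) s 1 unfolding survives_def by auto
  next
    case 2
    have "Max (insert a {x \<in> ?U. x \<le> s - 1}) = Max (insert m {x \<in> P. x \<le> s - 1})"
      using fin assms(1,2) 2 by (intro Max_eq_Max_cofinal_subset) fastforce+
    then show ?thesis using assms(5) s 2 unfolding survives_def by auto
  qed
qed

text \<open>Each inserted point raises the 2-adic valuation of the current state by \<open>k\<close>, which is
  where the logarithmic bound on the number of points comes from.\<close>
lemma survives_segment_valuation:
  assumes k: "1 \<le> k" "2 ^ k \<le> g + 1" and "0 < a"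
  shows "\<exists>P \<subseteq> {a<..<b}. survives g a P b \<and>
           (P \<noteq> {} \<longrightarrow> g * 2 ^ (multiplicity (2::nat) a + (card P - 1) * k) < b - a)"
  using \<open>0 < a\<close>
proof (induction "b - a" arbitrary: a rule: less_induct)
  case (less a)
  show ?case
  proof (cases "b \<le> reach g a")
    case True
    then show ?thesis by (intro exI[of _ "{}"]) (auto simp: survives_def)
  next
    case False
    define u where "u = multiplicity (2::nat) a"
    define y where "y = (a div 2 ^ (u + k) + 1) * 2 ^ (u + k)"
    have ay: "a < y" and gap: "y - a \<le> (2 ^ k - 1) * 2 ^ u"
      and val: "u + k \<le> multiplicity (2::nat) y"
      using next_multiple_raises_multiplicity[OF less.prems k(1) u_def] unfolding y_def by auto
    have "(2 ^ k - 1) * 2 ^ u \<le> g * 2 ^ u" using k by simp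
    then have y_reach: "y \<le> reach g a" using ay gap unfolding reach_def u_def by linarith
    then have "y < b" using False by simp
    then have "b - y < b - a" using ay by linarith
    then obtain P' where P': "P' \<subseteq> {y<..<b}" "survives g y P' b"
      and bound': "P' \<noteq> {} \<longrightarrow> g * 2 ^ (multiplicity (2::nat) y + (card P' - 1) * k) < b - y"
      using less.hyps[of y] ay by blast
    have "survives g a {} y" using y_reach by (auto simp: survives_def)
    then have surv: "survives g a ({} \<union> {y} \<union> P') b"
      by (intro survives_concat[OF ay _ _ P']) auto
    have "y \<notin> P'" using P'(1) by auto
    then have card: "card (insert y P') = Suc (card P')"
      using finite_subset[OF P'(1)] by simp
    have "g * 2 ^ (u + (card (insert y P') - 1) * k) < b - a"
    proof (cases "P' = {}")
      case True
      then show ?thesis using False unfolding reach_def u_def by simp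
    next
      case False
      then have "card P' \<ge> 1" using finite_subset[OF P'(1)] by (simp add: Suc_leI card_gt_0_iff)
      then have "u + (card (insert y P') - 1) * k \<le> multiplicity (2::nat) y + (card P' - 1) * k"
        using card val by (cases "card P'") auto
      then have "g * 2 ^ (u + (card (insert y P') - 1) * k)
                   \<le> g * 2 ^ (multiplicity (2::nat) y + (card P' - 1) * k)"
        by (intro mult_le_mono2 power_increasing) auto
      also have "\<dots> < b - y" using bound' False by simp
      finally show ?thesis using ay by linarith
    qed
    then show ?thesis
      using surv P'(1) ay \<open>y < b\<close> unfolding u_def by (intro exI[of _ "insert y P'"]) auto
  qed
qed

lemma survives_segment:
  assumes "1 \<le> k" "2 ^ k \<le> g + 1" "0 < a"
  shows "\<exists>P \<subseteq> {a<..<b}. survives g a P b \<and> fits k (card P) (b - a)"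
proof -
  obtain P where P: "P \<subseteq> {a<..<b}" "survives g a P b"
    and bound: "P \<noteq> {} \<longrightarrow> g * 2 ^ (multiplicity (2::nat) a + (card P - 1) * k) < b - a"
    using survives_segment_valuation[OF assms] by blast
  have "2 ^ 1 \<le> (2::nat) ^ k" using assms(1) by (intro power_increasing) auto
  then have "1 \<le> g" using assms(2) by simp
  have "(2::nat) ^ ((card P - 1) * k) \<le> 2 ^ (multiplicity (2::nat) a + (card P - 1) * k)"
    by (intro power_increasing) auto
  also have "\<dots> \<le> g * 2 ^ (multiplicity (2::nat) a + (card P - 1) * k)"
    using \<open>1 \<le> g\<close> by simp
  finally show ?thesis using P bound unfolding fits_def by (intro exI[of _ P]) fastforce
qed

text \<open>The list \<open>ps\<close> records, for each of the \<open>card T + 1\<close> gaps of \<open>T\<close>, its length and the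
  number of points inserted into it.\<close>
lemma survives_cover:
  assumes k: "1 \<le> k" "2 ^ k \<le> g + 1" and "0 < a" "a < b" "T \<subseteq> {a<..<b}"
  shows "\<exists>S ps. T \<subseteq> S \<and> S \<subseteq> {a<..<b} \<and> survives g a S b \<and>
           length ps = card T + 1 \<and> sum_list (map fst ps) = b - a \<and>
           (\<forall>(d, j)\<in>set ps. 0 < d \<and> fits k j d) \<and> card S \<le> card T + sum_list (map snd ps)"
proof -
  have "finite T" using assms(5) finite_subset by blast
  then show ?thesis
    using assms(4,5)
  proof (induction T arbitrary: b rule: finite_linorder_max_induct)
    case empty
    obtain P where "P \<subseteq> {a<..<b}" "survives g a P b" "fits k (card P) (b - a)"
      using survives_segment[OF k \<open>0 < a\<close>] by blast
    then show ?case using empty.prems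
      by (intro exI[of _ P] exI[of _ "[(b - a, card P)]"]) auto
  next
    case (insert m T')
    have m: "a < m" "m < b" and T': "T' \<subseteq> {a<..<m}" using insert by auto
    obtain S' ps' where S': "T' \<subseteq> S'" "S' \<subseteq> {a<..<m}" "survives g a S' m"
      "length ps' = card T' + 1" "sum_list (map fst ps') = m - a"
      "\<forall>(d, j)\<in>set ps'. 0 < d \<and> fits k j d" "card S' \<le> card T' + sum_list (map snd ps')"
      using insert.IH[OF m(1) T'] by blast
    obtain P where P: "P \<subseteq> {m<..<b}" "survives g m P b" "fits k (card P) (b - m)"
      using survives_segment[OF k, of m b] m \<open>0 < a\<close> by auto
    have "card (S' \<union> {m} \<union> P) \<le> card S' + card {m} + card P"
      by (metis card_Un_le add_le_mono1 order_trans)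
    moreover have "card (insert m T') = Suc (card T')"
      using insert.hyps by auto
    ultimately show ?case
      using S' P m survives_concat[OF m(1) S'(2,3) P(1,2)]
      by (intro exI[of _ "S' \<union> {m} \<union> P"] exI[of _ "(b - m, card P) # ps'"]) auto
  qed
qed

lemma survives_imp_mweight_pos:
  assumes "survives g 1 S (n + 1)"
    and p: "\<And>t t'. 1 \<le> t' \<Longrightarrow> t' < t \<Longrightarrow> 0 < p t t' \<and> p t t' < 1"
  shows "mweight (phat g p) n S > 0"
  unfolding mweight_def
proof (rule prod_pos)
  fix s assume s: "s \<in> {2..n}"
  define t' where "t' = last_sw S (s - 1)"
  have "finite (insert 1 {x \<in> S. x \<le> s - 1})"
    by (rule finite_subset[of _ "{..s - 1}"]) (use s in auto)
  then have t': "1 \<le> t'" "t' < s" using s unfolding t'_def last_sw_def by auto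
  then have p': "0 < p s t'" "p s t' < 1" using p by auto
  show "0 < (if s \<in> S then phat g p s (last_sw S (s - 1))
              else 1 - phat g p s (last_sw S (s - 1)))"
  proof (cases "s \<in> S")
    case True
    have "hprune g s t' = 0 \<or> hprune g s t' = 1" unfolding hprune_def by simp
    then show ?thesis using True p' unfolding phat_def t'_def[symmetric] by auto
  next
    case False
    then have "s < reach g t'"
      using assms(1) s unfolding survives_def t'_def last_sw_def by simp
    then have "hprune g s t' = 1" using t' unfolding hprune_def reach_def by simp
    then show ?thesis using False p' unfolding phat_def t'_def[symmetric] by simp
  qed
qed

lemma fits_imp_le_ceiling_log:
  assumes "1 \<le> k" "0 < d" "fits k j d"
  shows "int j \<le> \<lceil>log 2 (real d) / real k\<rceil>"
proof (cases "j = 0")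
  case True
  have "0 \<le> log 2 (real d) / real k" using assms(2) by simp
  then show ?thesis using True by simp
next
  case False
  then have "(2::real) ^ ((j - 1) * k) < real d"
    using assms(3) unfolding fits_def by (metis of_nat_less_iff of_nat_numeral of_nat_power)
  then have "real (j - 1) * real k < log 2 (real d)"
    using less_log_of_power[of 2 "(j - 1) * k"] by auto
  then have "real (j - 1) < log 2 (real d) / real k"
    using assms(1) by (simp add: pos_less_divide_eq)
  then show ?thesis using False by linarith
qed

lemma sum_list_ln_le:
  fixes xs :: "real list"
  assumes "xs \<noteq> []" "\<forall>x\<in>set xs. 0 < x"
  shows "sum_list (map ln xs) \<le> length xs * ln (sum_list xs / length xs)"
proof -
  define mu where "mu = sum_list xs / length xs"
  have "0 < sum_list xs"
    using assms by (cases xs) (auto intro: add_pos_nonneg sum_list_nonneg less_imp_le)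
  then have mu: "0 < mu" using assms mu_def by simp
  have "sum_list (map ln xs) \<le> sum_list (map (\<lambda>x. (ln mu - 1) + x / mu) xs)"
  proof (rule sum_list_mono)
    fix x assume "x \<in> set xs"
    then have "0 < x" using assms by auto
    then have "ln (x / mu) \<le> x / mu - 1" using mu by (intro ln_le_minus_one) simp
    then show "ln x \<le> (ln mu - 1) + x / mu" using \<open>0 < x\<close> mu by (simp add: ln_div)
  qed
  also have "\<dots> = length xs * (ln mu - 1) + sum_list xs / mu"
    by (induction xs) (auto simp: algebra_simps add_divide_distrib)
  also have "sum_list xs / mu = length xs" using mu_def \<open>0 < sum_list xs\<close> by simp
  finally show ?thesis unfolding mu_def by (simp add: algebra_simps)
qed

lemma sum_points_le_log_mean:
  assumes "1 \<le> k" "ps \<noteq> []" "\<forall>(d, j)\<in>set ps. 0 < d \<and> fits k j d"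
  shows "real (sum_list (map snd ps))
           \<le> length ps * (log 2 (real (sum_list (map fst ps)) / length ps) / k + 1)"
proof -
  define xs where "xs = map (\<lambda>x. real (fst x)) ps"
  have "real (sum_list (map snd ps)) = sum_list (map (\<lambda>x. real (snd x)) ps)"
    by (induction ps) auto
  also have "\<dots> \<le> sum_list (map (\<lambda>x. ln x / (ln 2 * k) + 1) xs)"
    unfolding xs_def using assms(3)
  proof (induction ps)
    case (Cons dj ps)
    obtain d j where dj: "dj = (d, j)" by fastforce
    then have "int j \<le> \<lceil>log 2 d / k\<rceil>"
      using fits_imp_le_ceiling_log[OF assms(1)] Cons.prems by auto
    then have "real j \<le> log 2 d / k + 1"
      using of_int_ceiling_le_add_one[of "log 2 d / k"] by linarith
    then show ?case using Cons dj by (simp add: log_def)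
  qed simp
  also have "\<dots> = sum_list (map ln xs) / (ln 2 * k) + length xs"
    by (induction xs) (auto simp: add_divide_distrib)
  also have "\<dots> \<le> length xs * ln (sum_list xs / length xs) / (ln 2 * k) + length xs"
  proof -
    have "\<forall>x\<in>set xs. 0 < x" using assms(3) unfolding xs_def by auto
    then show ?thesis
      using sum_list_ln_le[of xs] assms(1,2) unfolding xs_def
      by (intro add_right_mono divide_right_mono) auto
  qed
  also have "sum_list xs = real (sum_list (map fst ps))"
    unfolding xs_def by (induction ps) auto
  finally show ?thesis
    unfolding xs_def by (simp add: log_def algebra_simps)
qed

lemma floor_log_exponent:
  assumes "1 \<le> g"
  shows "1 \<le> nat \<lfloor>log 2 (real g + 1)\<rfloor>" "2 ^ nat \<lfloor>log 2 (real g + 1)\<rfloor> \<le> g + 1"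
proof -
  define k where "k = nat \<lfloor>log 2 (real g + 1)\<rfloor>"
  have "1 \<le> log 2 (real g + 1)" using assms by simp
  then show "1 \<le> k" unfolding k_def by linarith
  have "(2::real) ^ k = 2 powr real k" by (simp add: powr_realpow)
  also have "\<dots> \<le> 2 powr log 2 (real g + 1)"
    unfolding k_def using \<open>1 \<le> log 2 (real g + 1)\<close> by (intro powr_mono) auto
  finally have "real (2 ^ k) \<le> real (g + 1)" by simp
  then show "2 ^ k \<le> g + 1" unfolding k_def of_nat_le_iff .
qed

lemma points_le_Lbound:
  assumes "1 \<le> g" and k: "k = nat \<lfloor>log 2 (real g + 1)\<rfloor>"
    and ps: "length ps = C + 1" "sum_list (map fst ps) = n" "\<forall>(d, j)\<in>set ps. 0 < d \<and> fits k j d"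
  shows "real (C + sum_list (map snd ps)) \<le> (real C + 1) * Lbound g C n - 1"
proof -
  have k1: "1 \<le> k" using floor_log_exponent(1)[OF assms(1)] k by simp
  have kr: "real_of_int \<lfloor>log 2 (real g + 1)\<rfloor> = real k" using k1 k by simp
  show ?thesis
  proof (cases "C = 0")
    case True
    then obtain j where "ps = [(n, j)]"
      using ps(1,2) by (cases ps) (auto simp: length_Suc_conv)
    then have "int j \<le> \<lceil>log 2 (real n) / real k\<rceil>"
      using fits_imp_le_ceiling_log[OF k1] ps(3) by auto
    then have "real j \<le> real_of_int \<lceil>log 2 (real n) / real k\<rceil>" by linarith
    then show ?thesis using True \<open>ps = [(n, j)]\<close> unfolding Lbound_def kr by simp
  next
    case False
    have "real (sum_list (map snd ps)) \<le> (C + 1) * (log 2 (real n / (real C + 1)) / k + 1)"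
      using sum_points_le_log_mean[OF k1 _ ps(3)] ps(1,2) by (cases ps) (auto simp: add.commute)
    then show ?thesis using False unfolding Lbound_def kr by (simp add: algebra_simps)
  qed
qed

theorem lemma4:
  fixes g n :: nat and p :: "nat \<Rightarrow> nat \<Rightarrow> real" and T :: "nat set"
  assumes "g \<ge> 1" and "n \<ge> 1"
    and "\<And>t t'. 1 \<le> t' \<Longrightarrow> t' < t \<Longrightarrow> 0 < p t t' \<and> p t t' < 1"
    and "T \<in> paths n"
  shows "\<exists>That \<in> paths n. mweight (phat g p) n That > 0 \<and> covers That T \<and>
           nsw T \<le> nsw That \<and>
           real (nsw That) \<le> (real (nsw T) + 1) * Lbound g (nsw T) n - 1"
proof -
  define k where "k = nat \<lfloor>log 2 (real g + 1)\<rfloor>"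
  have "T \<subseteq> {1<..<n + 1}" using assms(4) unfolding paths_def by auto
  then obtain S ps where S: "T \<subseteq> S" "S \<subseteq> {1<..<n + 1}" "survives g 1 S (n + 1)"
    and ps: "length ps = card T + 1" "sum_list (map fst ps) = n"
      "\<forall>(d, j)\<in>set ps. 0 < d \<and> fits k j d"
    and card: "card S \<le> card T + sum_list (map snd ps)"
    using survives_cover[of k g 1 "n + 1" T] floor_log_exponent[OF assms(1)] assms(2)
    unfolding k_def by auto
  have "S \<subseteq> {2..n}" using S(2) by auto
  moreover have "card T \<le> card S" using S(1) \<open>S \<subseteq> {2..n}\<close> by (simp add: card_mono finite_subset)
  moreover have "real (card S) \<le> (real (card T) + 1) * Lbound g (card T) n - 1"
    using points_le_Lbound[OF assms(1) k_def ps] card by linarith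
  ultimately show ?thesis
    using survives_imp_mweight_pos[OF S(3) assms(3)] S(1)
    unfolding paths_def covers_def nsw_def by auto
qed

end
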